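(* Let $1 \leq k \leq n$ and $x \in [0,1]^n$. Then for every subset $W \subseteq \{1, \ldots, n\}$ with $|W| \geq k$, $$Q_k(x) \geq \frac{1}{|W| - k + 1}\left(\sum_{i \in W} x_i - k + 1\right).$$
   Context: For $x \in \mathbb{R}^n$ and an integer $1 \leq k \leq n$, $Q_k(x)$ denotes the $k$-th largest entry of $x$ (entries counted with multiplicity). *)

theory Defs
  imports Complex_Main
begin

definition kth_largest :: "nat \<Rightarrow> (nat \<Rightarrow> real) \<Rightarrow> nat \<Rightarrow> real" where
  "kth_largest n x k = rev (sort (map x [1..<n+1])) ! (k - 1)"

end

theory Submission
  imports Defs "HOL-Library.Multiset"
begin

(* Let q = Q_k(x). Fewer than k entries exceed q, and each of them is at most 1,
   while every other entry indexed by W is at most q. Hence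
   sum_W x <= |W| q + (k - 1)(1 - q), which rearranges to the claim since q <= 1. *)

lemma length_filter_greater_rev_sort_nth:
  fixes xs :: "'a::linorder list"
  assumes "j < length xs"
  shows "length (filter (\<lambda>v. rev (sort xs) ! j < v) xs) \<le> j"
proof -
  define L where "L = rev (sort xs)"
  have desc: "sorted_wrt (\<ge>) L"
    unfolding L_def by (simp add: sorted_wrt_rev)
  have "length (filter (\<lambda>v. L ! j < v) xs) = length (filter (\<lambda>v. L ! j < v) L)"
    unfolding L_def by (metis mset_filter mset_rev mset_sort size_mset)
  also have "\<dots> = card {i. i < length L \<and> L ! j < L ! i}"
    by (rule length_filter_conv_card)
  also have "\<dots> \<le> card {..<j}"
  proof (rule card_mono)
    show "{i. i < length L \<and> L ! j < L ! i} \<subseteq> {..<j}"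
    proof
      fix i assume "i \<in> {i. i < length L \<and> L ! j < L ! i}"
      then have "i < length L" "\<not> L ! i \<le> L ! j" by auto
      then show "i \<in> {..<j}"
        using sorted_wrt_nth_less[OF desc, of j i] by (cases i j rule: linorder_cases) auto
    qed
  qed simp
  finally show ?thesis unfolding L_def by simp
qed

lemma card_greater_kth_largest:
  fixes x :: "nat \<Rightarrow> real"
  assumes "1 \<le> k" "k \<le> n"
  shows "card {i\<in>{1..n}. kth_largest n x k < x i} \<le> k - 1"
proof -
  define P where "P = (\<lambda>v. kth_largest n x k < v)"
  have "card {i\<in>{1..n}. kth_largest n x k < x i} = card (set (filter (P \<circ> x) [1..<n+1]))"
    unfolding P_def by (intro arg_cong[where f = card]) auto
  also have "\<dots> = length (filter (P \<circ> x) [1..<n+1])"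
    by (rule distinct_card) simp
  also have "\<dots> = length (filter P (map x [1..<n+1]))"
    by (simp add: filter_map)
  also have "\<dots> \<le> k - 1"
    unfolding P_def kth_largest_def using assms
    by (intro length_filter_greater_rev_sort_nth) simp
  finally show ?thesis .
qed

lemma kth_largest_mem_image:
  fixes x :: "nat \<Rightarrow> real"
  assumes "1 \<le> k" "k \<le> n"
  shows "kth_largest n x k \<in> x ` {1..n}"
proof -
  have "kth_largest n x k \<in> set (rev (sort (map x [1..<n+1])))"
    unfolding kth_largest_def using assms by (intro nth_mem) simp
  then show ?thesis by auto
qed

lemma sum_le_threshold_bound:
  fixes x :: "'a \<Rightarrow> real" and q :: real
  assumes "finite W" "\<forall>i\<in>W. x i \<le> 1" "q \<le> 1"
    and "card {i\<in>W. q < x i} \<le> m"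
  shows "(\<Sum>i\<in>W. x i) \<le> card W * q + m * (1 - q)"
proof -
  define A where "A = {i\<in>W. q < x i}"
  have AW: "A \<subseteq> W" unfolding A_def by auto
  have "(\<Sum>i\<in>W. x i) = (\<Sum>i\<in>A. x i) + (\<Sum>i\<in>W - A. x i)"
    using sum.subset_diff[OF AW assms(1)] by (simp add: add.commute)
  also have "\<dots> \<le> (\<Sum>i\<in>A. (1::real)) + (\<Sum>i\<in>W - A. q)"
    using AW assms(2) by (intro add_mono sum_mono) (auto simp: A_def)
  also have "\<dots> = card W * q + card A * (1 - q)"
    using card_Diff_subset[OF finite_subset[OF AW assms(1)] AW] card_mono[OF assms(1) AW]
    by (simp add: algebra_simps)
  also have "\<dots> \<le> card W * q + m * (1 - q)"
    using assms(3,4) unfolding A_def by (intro add_left_mono mult_right_mono) auto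
  finally show ?thesis .
qed

theorem theorem3:
  fixes n k :: nat and x :: "nat \<Rightarrow> real" and W :: "nat set"
  assumes "1 \<le> k" and "k \<le> n"
    and "\<forall>i\<in>{1..n}. 0 \<le> x i \<and> x i \<le> 1"
    and "W \<subseteq> {1..n}" and "card W \<ge> k"
  shows "kth_largest n x k \<ge> ((\<Sum>i\<in>W. x i) - real k + 1) / (real (card W) - real k + 1)"
proof -
  define q where "q = kth_largest n x k"
  have "q \<le> 1"
    using kth_largest_mem_image[OF assms(1,2), of x] assms(3) unfolding q_def by auto
  moreover have "card {i\<in>W. q < x i} \<le> k - 1"
  proof -
    have "card {i\<in>W. q < x i} \<le> card {i\<in>{1..n}. q < x i}"
      using assms(4) by (intro card_mono) auto
    also have "\<dots> \<le> k - 1"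
      unfolding q_def by (rule card_greater_kth_largest[OF assms(1,2)])
    finally show ?thesis .
  qed
  ultimately have "(\<Sum>i\<in>W. x i) \<le> card W * q + (k - 1) * (1 - q)"
    using assms(3,4) finite_subset[OF assms(4)] by (intro sum_le_threshold_bound) auto
  then have "(\<Sum>i\<in>W. x i) - real k + 1 \<le> q * (real (card W) - real k + 1)"
    using assms(1) by (simp add: algebra_simps)
  moreover have "real (card W) - real k + 1 > 0"
    using assms(5) by linarith
  ultimately show ?thesis
    unfolding q_def by (simp add: pos_divide_le_eq)
qed

end
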